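(* For every integer $k\ge1$, $N(2k+5,k)=1$.
   Context: For $n>k\ge1$, $N(n,k)$ is the nullity of the $n\times n$ skew-symmetric Toeplitz matrix $A(n,k)$ whose first $k$ superdiagonals have all entries $1$ and whose remaining superdiagonals have all entries $0$. *)

theory Defs
  imports "Jordan_Normal_Form.Matrix_Kernel"
begin

definition A_mat :: "nat \<Rightarrow> nat \<Rightarrow> real mat" where
  "A_mat n k = mat n n (\<lambda>(i, j).
      if i < j \<and> j - i \<le> k then 1
      else if j < i \<and> i - j \<le> k then -1
      else 0)"

definition N_null :: "nat \<Rightarrow> nat \<Rightarrow> nat" where
  "N_null n k = kernel_dim (A_mat n k)"

end

theory Submission
  imports Defs
begin

text \<open>A(n,k) is skew-symmetric, so for odd n it is singular. In terms of the prefix sums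
  Q m = x_0 + ... + x_(m-1) of a vector x, the rows of A(2k+5,k) x = 0 read
  Q(i+k+1) - Q(i+1) - Q(i) + Q(i-k) = 0. If in addition the entries of x sum to 0, the rows near
  the two ends of the band force Q 2 = Q 4 = 0 and Q 1 = - Q 3 = - Q k, while the remaining rows
  give Q(j-1) + Q(j) + Q(j+1) = 0, so that Q is 3-periodic on [3, k+1]. Comparing Q k or Q(k+1)
  with Q 3 then forces Q 3 = 0 and hence Q = 0 (for k \<le> 2 the system is small enough to be
  solved directly). So the sum of the entries is a linear functional that is injective on the
  kernel, which is therefore one-dimensional.\<close>

lemma det_skew_symmetric_odd:
  fixes A :: "'a :: {idom, ring_char_0} mat"
  assumes A: "A \<in> carrier_mat n n" and skew: "transpose_mat A = - A" and "odd n"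
  shows "det A = 0"
proof -
  have "- A = (-1) \<cdot>\<^sub>m A"
    using A by (intro eq_matI) auto
  then have "det A = - det A"
    using det_transpose[OF A] skew A \<open>odd n\<close> by simp
  then show ?thesis
    by simp
qed

lemma kernel_dim_eq_1I:
  fixes A :: "'a :: field mat"
  assumes A: "A \<in> carrier_mat n n" and singular: "det A = 0" and w: "w \<in> carrier_vec n"
    and separates: "\<And>x. x \<in> mat_kernel A \<Longrightarrow> w \<bullet> x = 0 \<Longrightarrow> x = 0\<^sub>v n"
  shows "kernel_dim A = 1"
proof -
  interpret kernel n n A
    using A by unfold_locales
  obtain v where v: "v \<in> carrier_vec n" "v \<noteq> 0\<^sub>v n" "A *\<^sub>v v = 0\<^sub>v n"
    using det_0_iff_vec_prod_zero[OF A] singular by auto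
  have v_ker: "v \<in> mat_kernel A"
    using v A by (intro mat_kernelI)
  have wv: "w \<bullet> v \<noteq> 0"
    using separates v_ker v by blast
  have "mat_kernel A \<subseteq> Ker.span {v}"
  proof
    fix x assume x_ker: "x \<in> mat_kernel A"
    have x: "x \<in> carrier_vec n" "A *\<^sub>v x = 0\<^sub>v n"
      using mat_kernelD[OF A x_ker] by auto
    define c where "c = (w \<bullet> x) / (w \<bullet> v)"
    have "A *\<^sub>v (x - c \<cdot>\<^sub>v v) = 0\<^sub>v n"
      using A x v by (simp add: mult_minus_distrib_mat_vec mult_mat_vec)
    moreover have "w \<bullet> (x - c \<cdot>\<^sub>v v) = 0"
      using w x v wv by (simp add: scalar_prod_minus_distrib c_def)
    ultimately have diff: "x - c \<cdot>\<^sub>v v = 0\<^sub>v n"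
      using x v A by (intro separates mat_kernelI) auto
    then have "x = c \<cdot>\<^sub>v v"
    proof (intro eq_vecI)
      fix i assume "i < dim_vec (c \<cdot>\<^sub>v v)"
      then have i: "i < n"
        using v by simp
      then have "(x - c \<cdot>\<^sub>v v) $ i = 0"
        by (simp add: diff)
      then show "x $ i = (c \<cdot>\<^sub>v v) $ i"
        using x v i by simp
    qed (use x v in simp)
    then show "x \<in> Ker.span {v}"
      using submodule.smult_closed[OF Ker.span_is_submodule, of "{v}" c v] Ker.span_self[of v] v_ker
      by auto
  qed
  then have "Ker.span {v} = mat_kernel A"
    using v_ker by (intro equalityI Ker.span_is_subset2) auto
  then have "dim = 1"
    using v v_ker by (intro Ker.dim1I) auto
  then show ?thesis
    by simp
qed

definition prefix_sum :: "'a :: comm_monoid_add vec \<Rightarrow> nat \<Rightarrow> 'a" where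
  "prefix_sum x m = (\<Sum>j<dim_vec x. if j < m then x $ j else 0)"

lemma prefix_sum_0 [simp]: "prefix_sum x 0 = 0"
  by (simp add: prefix_sum_def)

lemma prefix_sum_Suc:
  fixes x :: "'a :: comm_monoid_add vec"
  assumes "j < dim_vec x"
  shows "prefix_sum x (Suc j) = prefix_sum x j + x $ j"
proof -
  have "prefix_sum x (Suc j) = (\<Sum>i<dim_vec x. (if i < j then x $ i else 0) + (if i = j then x $ i else 0))"
    unfolding prefix_sum_def by (intro sum.cong) auto
  also have "\<dots> = prefix_sum x j + x $ j"
    using assms by (simp add: sum.distrib prefix_sum_def)
  finally show ?thesis .
qed

lemma prefix_sum_beyond:
  assumes "dim_vec x \<le> m"
  shows "prefix_sum x m = (\<Sum>j<dim_vec x. x $ j)"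
  unfolding prefix_sum_def using assms by (intro sum.cong) auto

lemma A_mat_carrier: "A_mat n k \<in> carrier_mat n n"
  by (simp add: A_mat_def)

lemma A_mat_skew: "transpose_mat (A_mat n k) = - A_mat n k"
  by (intro eq_matI) (auto simp: A_mat_def)

lemma A_mat_entry_indicators:
  assumes "i < n" "j < n"
  shows "A_mat n k $$ (i, j) =
    of_bool (j < i + k + 1) - of_bool (j < i + 1) - of_bool (j < i) + of_bool (j < i - k)"
  using assms by (auto simp: A_mat_def)

lemma A_mat_mult_vec_prefix_sum:
  assumes x: "x \<in> carrier_vec n" and i: "i < n"
  shows "(A_mat n k *\<^sub>v x) $ i =
    prefix_sum x (i + k + 1) - prefix_sum x (i + 1) - prefix_sum x i + prefix_sum x (i - k)"
proof -
  have "(A_mat n k *\<^sub>v x) $ i = (\<Sum>j<n. A_mat n k $$ (i, j) * x $ j)"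
    using x i A_mat_carrier[of n k] by (simp add: scalar_prod_def lessThan_atLeast0)
  also have "\<dots> = (\<Sum>j<n. (if j < i + k + 1 then x $ j else 0) - (if j < i + 1 then x $ j else 0)
      - (if j < i then x $ j else 0) + (if j < i - k then x $ j else 0))"
    using i by (intro sum.cong) (auto simp: A_mat_entry_indicators)
  also have "\<dots> = prefix_sum x (i + k + 1) - prefix_sum x (i + 1) - prefix_sum x i + prefix_sum x (i - k)"
    using x by (simp add: prefix_sum_def sum.distrib sum_subtractf)
  finally show ?thesis .
qed

text \<open>Q plays the role of the prefix sums of a kernel vector of A(2k+5,k) with entry sum 0:
  because Q vanishes at 0 and from 2k+5 on, the truncated subtraction i - k and the overshoot
  i + k + 1 cut the band off exactly at the borders of the matrix.\<close>

locale band_prefix_recurrence =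
  fixes k :: nat and Q :: "nat \<Rightarrow> 'a :: linordered_field"
  assumes Q_0: "Q 0 = 0"
    and Q_beyond: "2 * k + 5 \<le> m \<Longrightarrow> Q m = 0"
    and band_rec: "i < 2 * k + 5 \<Longrightarrow> Q (i + k + 1) - Q (i + 1) - Q i + Q (i - k) = 0"
begin

lemma head_rec: "i \<le> k \<Longrightarrow> Q (k + 1 + i) = Q (i + 1) + Q i"
  using band_rec[of i] Q_0 by (simp add: add.commute add.left_commute)

lemma tail_rec: "4 \<le> j \<Longrightarrow> j \<le> k + 4 \<Longrightarrow> Q j = Q (j + k + 1) + Q (j + k)"
  using band_rec[of "j + k"] Q_beyond[of "j + k + k + 1"] by simp

lemma boundary_values:
  assumes "3 \<le> k"
  shows "Q 1 = - Q 3" "Q 2 = 0" "Q 4 = 0" "Q k = Q 3"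
proof -
  have "Q (k + 1) = Q 1" "Q (k + 2) = Q 2 + Q 1" "Q (k + 3) = Q 3 + Q 2" "Q (k + 4) = Q 4 + Q 3"
      "Q (2 * k + 1) = Q (k + 1) + Q k"
    using head_rec[of 0] head_rec[of 1] head_rec[of 2] head_rec[of 3] head_rec[of k] assms Q_0
    by (simp_all add: algebra_simps numeral_eq_Suc)
  moreover have "Q (k + 1) = Q (2 * k + 2) + Q (2 * k + 1)" "Q (k + 2) = Q (2 * k + 3) + Q (2 * k + 2)"
      "Q (k + 3) = Q (2 * k + 4) + Q (2 * k + 3)" "Q (k + 4) = Q (2 * k + 4)"
    using tail_rec[of "k + 1"] tail_rec[of "k + 2"] tail_rec[of "k + 3"] tail_rec[of "k + 4"]
      Q_beyond[of "2 * k + 5"] assms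
    by (simp_all add: algebra_simps numeral_eq_Suc)
  moreover have "Q (2 * k + 2) - Q (k + 2) - Q (k + 1) + Q 1 = 0"
      "Q (2 * k + 3) - Q (k + 3) - Q (k + 2) + Q 2 = 0"
      "Q (2 * k + 4) - Q (k + 4) - Q (k + 3) + Q 3 = 0"
    using band_rec[of "k + 1"] band_rec[of "k + 2"] band_rec[of "k + 3"]
    by (simp_all add: algebra_simps numeral_eq_Suc)
  ultimately show "Q 1 = - Q 3" "Q 2 = 0" "Q 4 = 0" "Q k = Q 3"
    by linarith+
qed

lemma three_term_rec:
  assumes "4 \<le> j" "j \<le> k"
  shows "Q (j - 1) + Q j + Q (j + 1) = 0"
proof -
  have "Q (j + k) = Q j + Q (j - 1)"
    using head_rec[of "j - 1"] assms by (simp add: add.commute)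
  moreover have "Q (j + k + 1) = Q (j + 1) + Q j"
    using head_rec[of j] assms by (simp add: algebra_simps)
  ultimately show ?thesis
    using tail_rec[of j] assms by simp
qed

lemma periodic:
  assumes "3 \<le> m" "m \<le> k + 1"
  shows "Q m = (if m mod 3 = 0 then Q 3 else if m mod 3 = 1 then 0 else - Q 3)"
  using assms
proof (induction m rule: less_induct)
  case (less m)
  consider "m = 3" | "m = 4" | "m = 5" | "6 \<le> m"
    using less.prems by linarith
  then show ?case
  proof cases
    case 2
    then show ?thesis
      using boundary_values(3) less.prems by simp
  next
    case 3
    then show ?thesis
      using three_term_rec[of 4] boundary_values(3) less.prems by simp
  next
    case 4
    define p where "p = m - 3"
    have m: "m = p + 3"
      using 4 by (simp add: p_def)
    have "Q p + Q (p + 1) + Q (p + 2) = 0" "Q (p + 1) + Q (p + 2) + Q (p + 3) = 0"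
      using three_term_rec[of "p + 1"] three_term_rec[of "p + 2"] less.prems 4 m
      by (simp_all add: numeral_eq_Suc)
    then have "Q m = Q p"
      using m by simp
    moreover have "p mod 3 = m mod 3"
      using m by simp
    moreover have "Q p = (if p mod 3 = 0 then Q 3 else if p mod 3 = 1 then 0 else - Q 3)"
      using less.IH[of p] less.prems 4 m by simp
    ultimately show ?thesis
      by simp
  qed simp
qed

lemma Q_3_eq_0:
  assumes "3 \<le> k"
  shows "Q 3 = 0"
proof -
  consider "k mod 3 = 0" | "k mod 3 = 1" | "k mod 3 = 2"
    by linarith
  then show ?thesis
  proof cases
    case 1
    then have "Q (k + 1) = 0"
      using periodic[of "k + 1"] assms by (simp add: mod_Suc)
    then show ?thesis
      using head_rec[of 0] boundary_values(1) assms Q_0 by simp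
  next
    case 2
    then show ?thesis
      using periodic[of k] boundary_values(4) assms by simp
  next
    case 3
    then show ?thesis
      using periodic[of k] boundary_values(4) assms by simp
  qed
qed

lemma vanishes_if_3_le:
  assumes "3 \<le> k"
  shows "Q m = 0"
proof -
  have low: "Q m = 0" if "m \<le> k + 1" for m
  proof -
    consider "m = 0" | "m = 1" | "m = 2" | "3 \<le> m"
      by linarith
    then show ?thesis
      using periodic[of m] boundary_values(1,2) Q_3_eq_0 assms that Q_0 by cases auto
  qed
  have mid: "Q m = 0" if "m \<le> 2 * k + 1" for m
  proof (cases "m \<le> k + 1")
    case False
    define i where "i = m - (k + 1)"
    have "m = k + 1 + i" "i \<le> k"
      using False that by (simp_all add: i_def)
    then show ?thesis
      using head_rec[of i] low[of i] low[of "i + 1"] by simp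
  qed (use low in simp)
  have high: "Q (2 * k + 2) = 0" "Q (2 * k + 3) = 0" "Q (2 * k + 4) = 0"
    using tail_rec[of "k + 1"] tail_rec[of "k + 2"] tail_rec[of "k + 3"]
      mid[of "k + 1"] mid[of "k + 2"] mid[of "k + 3"] mid[of "2 * k + 1"] assms
    by (simp_all add: algebra_simps numeral_eq_Suc)
  consider "m \<le> 2 * k + 1" | "m = 2 * k + 2" | "m = 2 * k + 3" | "m = 2 * k + 4" | "2 * k + 5 \<le> m"
    by linarith
  then show ?thesis
    using mid high Q_beyond by cases auto
qed

lemma vanishes_if_k_eq_1:
  assumes "k = 1"
  shows "Q m = 0"
proof -
  have "Q 2 - Q 1 = 0" "Q 3 - Q 2 - Q 1 = 0" "Q 4 - Q 3 - Q 2 + Q 1 = 0"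
    "Q 5 - Q 4 - Q 3 + Q 2 = 0" "Q 6 - Q 5 - Q 4 + Q 3 = 0" "- Q 6 - Q 5 + Q 4 = 0" "- Q 6 + Q 5 = 0"
    using band_rec[of 0] band_rec[of 1] band_rec[of 2] band_rec[of 3] band_rec[of 4]
      band_rec[of 5] band_rec[of 6] Q_beyond[of 7] Q_beyond[of 8] Q_0 assms
    by (simp_all add: numeral_eq_Suc)
  then have "Q 1 = 0 \<and> Q 2 = 0 \<and> Q 3 = 0 \<and> Q 4 = 0 \<and> Q 5 = 0 \<and> Q 6 = 0"
    by linarith
  then show ?thesis
    using Q_beyond[of m] Q_0 assms by (cases "m < 7") (auto simp: less_Suc_eq numeral_eq_Suc)
qed

lemma vanishes_if_k_eq_2:
  assumes "k = 2"
  shows "Q m = 0"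
proof -
  have "Q 3 - Q 1 = 0" "Q 4 - Q 2 - Q 1 = 0" "Q 5 - Q 3 - Q 2 = 0" "Q 6 - Q 4 - Q 3 + Q 1 = 0"
    "Q 7 - Q 5 - Q 4 + Q 2 = 0" "Q 8 - Q 6 - Q 5 + Q 3 = 0" "- Q 7 - Q 6 + Q 4 = 0"
    "- Q 8 - Q 7 + Q 5 = 0" "- Q 8 + Q 6 = 0"
    using band_rec[of 0] band_rec[of 1] band_rec[of 2] band_rec[of 3] band_rec[of 4]
      band_rec[of 5] band_rec[of 6] band_rec[of 7] band_rec[of 8]
      Q_beyond[of 9] Q_beyond[of 10] Q_beyond[of 11] Q_0 assms
    by (simp_all add: numeral_eq_Suc)
  then have "Q 1 = 0 \<and> Q 2 = 0 \<and> Q 3 = 0 \<and> Q 4 = 0 \<and> Q 5 = 0 \<and> Q 6 = 0 \<and> Q 7 = 0 \<and> Q 8 = 0"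
    by linarith
  then show ?thesis
    using Q_beyond[of m] Q_0 assms by (cases "m < 9") (auto simp: less_Suc_eq numeral_eq_Suc)
qed

lemma vanishes:
  assumes "1 \<le> k"
  shows "Q m = 0"
proof -
  consider "k = 1" | "k = 2" | "3 \<le> k"
    using assms by linarith
  then show ?thesis
    using vanishes_if_k_eq_1 vanishes_if_k_eq_2 vanishes_if_3_le by cases
qed

end

lemma A_mat_kernel_eq_0_if_sum_eq_0:
  assumes k: "1 \<le> k" and x_ker: "x \<in> mat_kernel (A_mat (2 * k + 5) k)"
    and sum: "vec (2 * k + 5) (\<lambda>_. 1) \<bullet> x = 0"
  shows "x = 0\<^sub>v (2 * k + 5)"
proof -
  let ?n = "2 * k + 5"
  have x: "x \<in> carrier_vec ?n" "A_mat ?n k *\<^sub>v x = 0\<^sub>v ?n"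
    using mat_kernelD[OF A_mat_carrier x_ker] by auto
  have total: "(\<Sum>j<?n. x $ j) = 0"
    using sum x by (simp add: scalar_prod_def lessThan_atLeast0)
  interpret band_prefix_recurrence k "prefix_sum x"
  proof
    show "prefix_sum x m = 0" if "?n \<le> m" for m
      using prefix_sum_beyond[of x m] total x that by simp
    show "prefix_sum x (i + k + 1) - prefix_sum x (i + 1) - prefix_sum x i + prefix_sum x (i - k) = 0"
      if "i < ?n" for i
      using A_mat_mult_vec_prefix_sum[OF x(1) that, where k = k] x(2) that by simp
  qed simp
  show ?thesis
  proof (rule eq_vecI)
    fix j assume "j < dim_vec (0\<^sub>v ?n :: real vec)"
    then have "x $ j = prefix_sum x (Suc j) - prefix_sum x j"
      using prefix_sum_Suc[of j x] x by simp
    then show "x $ j = 0\<^sub>v ?n $ j"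
      using vanishes[OF k] \<open>j < dim_vec (0\<^sub>v ?n)\<close> by simp
  qed (use x in simp)
qed

theorem theorem8p5:
  fixes k :: nat
  assumes "k \<ge> 1"
  shows "N_null (2 * k + 5) k = 1"
  unfolding N_null_def
proof (rule kernel_dim_eq_1I)
  show "det (A_mat (2 * k + 5) k) = 0"
    by (rule det_skew_symmetric_odd[OF A_mat_carrier A_mat_skew]) simp
  show "vec (2 * k + 5) (\<lambda>_. 1) \<in> carrier_vec (2 * k + 5)"
    by simp
qed (use A_mat_carrier A_mat_kernel_eq_0_if_sum_eq_0 assms in auto)

end
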